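(* Let $\{\tau_n\}$ be a nonnegative sequence and $\{b_n\}$ a strictly positive non-decreasing sequence. Let $X$ be a random variable with $\sum_{n=1}^\infty\tau_nnP(|X|\ge b_n)<\infty$. Fix $\nu\in[0,\infty)$ and put $T_k=\sum_{n=1}^kn\tau_n$. Suppose there are constants $C\in(0,\infty)$ and $\theta\in[1,\infty)$ such that $$\frac{b_n^{\nu\theta}}{n^{\theta-1}}\sum_{k=n}^\infty\frac{k^\theta\tau_k}{b_k^{\nu\theta}}\le CT_{n-1}\quad\text{for all }n\ge2,$$ and $$\frac{kb_n^\nu}{b_k^\nu}\le CT_{n-1}\quad\text{whenever }k\ge n\ge2.$$ Then $$\sum_{n=1}^\infty\tau_n\left(\frac{nE[|X|^\nu1_{\{|X|<b_n\}}]}{b_n^\nu}\right)^{\theta}<\infty.$$ *)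

theory Defs
  imports "HOL-Probability.Probability"
begin

text \<open>Real power with the convention 0^0 = 1 (so that |X|^0 = 1), as in E[|X|^nu 1_{|X|<b}].\<close>
definition rpow0 :: "real \<Rightarrow> real \<Rightarrow> real" where
  "rpow0 x a = (if x = 0 then (if a = 0 then 1 else 0) else x powr a)"

end

theory Submission
  imports Defs
begin

(*
  Put p_n = P(|X| >= b_n) and T_n = sum_{i <= n} i tau_i.  Splitting {|X| < b_n} into the
  shells {b_i <= |X| < b_(i+1)} gives
    E[|X|^nu 1{|X| < b_n}] <= b_1^nu + s_n,   s_n = sum_{1 <= i < n} b_(i+1)^nu (p_i - p_(i+1)).
  Summation by parts turns the moment hypothesis into
    sum_i T_i (p_i - p_(i+1)) <= m,   m = sum_n n tau_n p_n < oo,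
  and the second condition then yields s_n <= C m b_n^nu / n.  By convexity
    s_n^theta <= theta sum_i (s_(i+1) - s_i) s_(i+1)^(theta-1);
  inserting the bound on s_(i+1) and interchanging the summations leaves, for each shell, the
  tail sum_{k > i} k^theta tau_k / b_k^(nu theta), which the first condition bounds by C T_i.
  So the s_n-part of the series is at most theta (C m)^theta.  The constant b_1^nu contributes
  sum_n n^theta tau_n / b_n^(nu theta), which is finite by the first condition for n = 2.
*)

lemma powr_sub_powr_le:
  fixes a b \<theta> :: real
  assumes "0 \<le> a" "a \<le> b" "1 \<le> \<theta>"
  shows "b powr \<theta> - a powr \<theta> \<le> \<theta> * b powr (\<theta> - 1) * (b - a)"
proof (cases "a = 0")
  case True
  have "b powr \<theta> = b powr (\<theta> - 1) * b"
    using assms by (cases "b = 0") (simp_all add: powr_diff)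
  also have "\<dots> \<le> \<theta> * b powr (\<theta> - 1) * b"
    using assms mult_right_mono[of 1 \<theta> "b powr (\<theta> - 1)"] by (intro mult_right_mono) auto
  finally show ?thesis
    using True assms by simp
next
  case False
  have "\<theta> * b powr (\<theta> - 1) * (a - b) \<le> a powr \<theta> - b powr \<theta>"
    using False assms
    by (intro convex_on_imp_above_tangent[where A = "{0<..}", OF powr_convex])
       (auto intro!: derivative_eq_intros simp: interior_open)
  then show ?thesis
    by (simp add: algebra_simps)
qed

lemma powr_add_le_two_powr:
  fixes u v \<theta> :: real
  assumes "0 \<le> u" "0 \<le> v" "0 \<le> \<theta>"
  shows "(u + v) powr \<theta> \<le> 2 powr \<theta> * (u powr \<theta> + v powr \<theta>)"
proof -
  have "(u + v) powr \<theta> \<le> (2 * max u v) powr \<theta>"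
    using assms by (intro powr_mono2) auto
  also have "\<dots> = 2 powr \<theta> * max u v powr \<theta>"
    using assms by (simp add: powr_mult)
  also have "\<dots> \<le> 2 powr \<theta> * (u powr \<theta> + v powr \<theta>)"
    by (intro mult_left_mono) (auto simp: max_def)
  finally show ?thesis .
qed

lemma powr_sum_le_sum_partial_sums:
  fixes x :: "nat \<Rightarrow> real" and \<theta> :: real
  assumes x_nonneg: "\<And>j. m \<le> j \<Longrightarrow> 0 \<le> x j" and "1 \<le> \<theta>"
  shows "(\<Sum>j\<in>{m..<n}. x j) powr \<theta> \<le> \<theta> * (\<Sum>j\<in>{m..<n}. x j * (\<Sum>i\<in>{m..<Suc j}. x i) powr (\<theta> - 1))"
proof (induction n)
  case 0
  then show ?case by simp
next
  case (Suc n)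
  show ?case
  proof (cases "m \<le> n")
    case True
    let ?S = "\<Sum>i\<in>{m..<n}. x i"
    have "0 \<le> ?S"
      by (intro sum_nonneg) (simp add: x_nonneg)
    then have "(?S + x n) powr \<theta> - ?S powr \<theta> \<le> \<theta> * (?S + x n) powr (\<theta> - 1) * x n"
      using powr_sub_powr_le[of ?S "?S + x n" \<theta>] x_nonneg True assms(2) by simp
    with Suc True show ?thesis
      by (simp add: algebra_simps)
  qed (simp add: Suc)
qed

lemma sum_mult_partial_sums_swap:
  fixes w r :: "nat \<Rightarrow> 'a::comm_semiring_0"
  shows "(\<Sum>n<N. w n * (\<Sum>i\<in>{m..<n}. r i)) = (\<Sum>i\<in>{m..<N}. r i * (\<Sum>n\<in>{Suc i..<N}. w n))"
  by (induction N) (auto simp: sum_distrib_left sum_distrib_right sum.distrib algebra_simps)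

lemma sum_by_parts:
  fixes a p :: "nat \<Rightarrow> 'a::comm_ring"
  shows "(\<Sum>i=1..k. a i * p i)
    = (\<Sum>i=1..k. (\<Sum>l=1..i. a l) * (p i - p (Suc i))) + (\<Sum>l=1..k. a l) * p (Suc k)"
  by (induction k) (simp_all add: algebra_simps)

locale tail_sequences =
  fixes \<tau> b p :: "nat \<Rightarrow> real" and \<nu> C \<theta> :: real
  assumes tau_nonneg: "\<And>n. 1 \<le> n \<Longrightarrow> 0 \<le> \<tau> n"
    and b_pos: "\<And>n. 1 \<le> n \<Longrightarrow> 0 < b n"
    and p_nonneg: "\<And>n. 0 \<le> p n"
    and p_antimono: "\<And>n. 1 \<le> n \<Longrightarrow> p (Suc n) \<le> p n"
    and summable_moment: "summable (\<lambda>n. real n * \<tau> n * p n)"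
    and C_nonneg: "0 \<le> C"
    and theta_ge_1: "1 \<le> \<theta>"
    and tail_condition: "\<And>n. 2 \<le> n \<Longrightarrow>
        summable (\<lambda>j. real (j + n) powr \<theta> * \<tau> (j + n) / b (j + n) powr (\<nu> * \<theta>)) \<and>
        b n powr (\<nu> * \<theta>) / real n powr (\<theta> - 1) *
          (\<Sum>j. real (j + n) powr \<theta> * \<tau> (j + n) / b (j + n) powr (\<nu> * \<theta>))
        \<le> C * (\<Sum>i=1..n-1. real i * \<tau> i)"
    and ratio_condition: "\<And>k n. 2 \<le> n \<Longrightarrow> n \<le> k \<Longrightarrow>
        real k * b n powr \<nu> / b k powr \<nu> \<le> C * (\<Sum>i=1..n-1. real i * \<tau> i)"
begin

definition T :: "nat \<Rightarrow> real" where
  "T n = (\<Sum>i=1..n. real i * \<tau> i)"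

definition moment :: real where
  "moment = (\<Sum>n. real n * \<tau> n * p n)"

(* With p n = P(|X| >= b n), q i is the mass of the shell b i <= |X| < b (i + 1) and s n dominates
   the contribution of b 1 <= |X| < b n to the truncated moment. *)

definition q :: "nat \<Rightarrow> real" where
  "q n = p n - p (Suc n)"

definition s :: "nat \<Rightarrow> real" where
  "s n = (\<Sum>i\<in>{1..<n}. b (Suc i) powr \<nu> * q i)"

definition w :: "nat \<Rightarrow> real" where
  "w n = real n powr \<theta> * \<tau> n / b n powr (\<nu> * \<theta>)"

definition r :: "nat \<Rightarrow> real" where
  "r i = q i * b (Suc i) powr (\<nu> * \<theta>) / real (Suc i) powr (\<theta> - 1)"

lemma T_nonneg: "0 \<le> T n"
  unfolding T_def by (intro sum_nonneg) (simp add: tau_nonneg)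

lemma q_nonneg: "1 \<le> i \<Longrightarrow> 0 \<le> q i"
  unfolding q_def using p_antimono by simp

lemma w_nonneg: "0 \<le> w n"
  unfolding w_def using tau_nonneg[of n] by (cases "n = 0") simp_all

lemma r_nonneg: "1 \<le> i \<Longrightarrow> 0 \<le> r i"
  unfolding r_def by (simp add: q_nonneg)

lemma s_nonneg: "0 \<le> s n"
  unfolding s_def by (intro sum_nonneg) (simp add: q_nonneg)

lemma moment_partial_sum_le: "(\<Sum>i=1..k. real i * \<tau> i * p i) \<le> moment"
  unfolding moment_def
  by (intro sum_le_suminf summable_moment) (auto simp: tau_nonneg p_nonneg not_less_eq_eq)

lemma moment_nonneg: "0 \<le> moment"
  using moment_partial_sum_le[of 0] by simp

lemma sum_T_q_le: "(\<Sum>i\<in>{1..<n}. T i * q i) \<le> moment"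
proof -
  have "(\<Sum>i=1..k. T i * q i) \<le> moment" for k
  proof -
    have "(\<Sum>i=1..k. T i * q i) \<le> (\<Sum>i=1..k. T i * q i) + T k * p (Suc k)"
      using T_nonneg p_nonneg by simp
    also have "\<dots> = (\<Sum>i=1..k. real i * \<tau> i * p i)"
      unfolding T_def q_def by (rule sum_by_parts[symmetric])
    also have "\<dots> \<le> moment"
      by (rule moment_partial_sum_le)
    finally show ?thesis .
  qed
  from this[of "n - 1"] show ?thesis
    by (cases n) (simp_all add: atLeastLessThanSuc_atLeastAtMost)
qed

lemma b_Suc_powr_le:
  assumes "1 \<le> i" "i < n"
  shows "b (Suc i) powr \<nu> \<le> C * b n powr \<nu> / real n * T i"
proof -
  have "real n * b (Suc i) powr \<nu> / b n powr \<nu> \<le> C * T i"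
    using ratio_condition[of "Suc i" n] assms unfolding T_def by simp
  then show ?thesis
    using b_pos[of n] assms by (simp add: field_simps)
qed

lemma s_le: "1 \<le> n \<Longrightarrow> s n \<le> C * moment * b n powr \<nu> / real n"
proof -
  assume "1 \<le> n"
  have "s n \<le> (\<Sum>i\<in>{1..<n}. C * b n powr \<nu> / real n * T i * q i)"
    unfolding s_def using b_Suc_powr_le by (intro sum_mono mult_right_mono) (auto simp: q_nonneg)
  also have "\<dots> = C * b n powr \<nu> / real n * (\<Sum>i\<in>{1..<n}. T i * q i)"
    by (simp add: sum_distrib_left mult.assoc)
  also have "\<dots> \<le> C * b n powr \<nu> / real n * moment"
    using C_nonneg by (intro mult_left_mono sum_T_q_le) simp
  finally show ?thesis
    by (simp add: mult_ac)
qed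

lemma increment_mult_s_powr_le:
  assumes "1 \<le> i"
  shows "b (Suc i) powr \<nu> * q i * s (Suc i) powr (\<theta> - 1) \<le> (C * moment) powr (\<theta> - 1) * r i"
proof -
  have b: "0 < b (Suc i)"
    using b_pos by simp
  have "s (Suc i) powr (\<theta> - 1) \<le> (C * moment * b (Suc i) powr \<nu> / real (Suc i)) powr (\<theta> - 1)"
    using s_le[of "Suc i"] s_nonneg theta_ge_1 by (intro powr_mono2) auto
  also have "\<dots> = (C * moment) powr (\<theta> - 1) * b (Suc i) powr (\<nu> * (\<theta> - 1)) / real (Suc i) powr (\<theta> - 1)"
    using C_nonneg moment_nonneg b by (simp add: powr_mult powr_divide powr_powr)
  finally have "b (Suc i) powr \<nu> * q i * s (Suc i) powr (\<theta> - 1)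
      \<le> b (Suc i) powr \<nu> * q i * ((C * moment) powr (\<theta> - 1) * b (Suc i) powr (\<nu> * (\<theta> - 1)) / real (Suc i) powr (\<theta> - 1))"
    using assms q_nonneg by (intro mult_left_mono) auto
  also have "\<dots> = (C * moment) powr (\<theta> - 1) * r i"
    using b unfolding r_def by (simp add: field_simps powr_add[symmetric])
  finally show ?thesis .
qed

lemma s_powr_le: "s n powr \<theta> \<le> \<theta> * (C * moment) powr (\<theta> - 1) * (\<Sum>i\<in>{1..<n}. r i)"
proof -
  have "s n powr \<theta> \<le> \<theta> * (\<Sum>i\<in>{1..<n}. b (Suc i) powr \<nu> * q i * s (Suc i) powr (\<theta> - 1))"
    unfolding s_def using powr_sum_le_sum_partial_sums[OF _ theta_ge_1] by (simp add: q_nonneg)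
  also have "\<dots> \<le> \<theta> * (\<Sum>i\<in>{1..<n}. (C * moment) powr (\<theta> - 1) * r i)"
    using theta_ge_1 increment_mult_s_powr_le by (intro mult_left_mono sum_mono) auto
  finally show ?thesis
    by (simp add: sum_distrib_left mult.assoc)
qed

lemma summable_w_shift: "1 \<le> i \<Longrightarrow> summable (\<lambda>j. w (j + Suc i))"
  using tail_condition[of "Suc i"] unfolding w_def by simp

lemma summable_w: "summable w"
  using summable_iff_shift[of w 2] summable_w_shift[of 1] by (simp add: numeral_2_eq_2)

lemma r_mult_sum_w_le:
  assumes "1 \<le> i"
  shows "r i * (\<Sum>n\<in>{Suc i..<N}. w n) \<le> C * (T i * q i)"
proof -
  have "(\<Sum>n\<in>{Suc i..<N}. w n) \<le> (\<Sum>j. w (j + Suc i))"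
  proof (cases "Suc i \<le> N")
    case True
    have "(\<Sum>n\<in>{Suc i..<N}. w n) = (\<Sum>j<N - Suc i. w (j + Suc i))"
      using True by (simp add: sum.atLeastLessThan_shift_0 atLeast0LessThan add.commute)
    also have "\<dots> \<le> (\<Sum>j. w (j + Suc i))"
      using summable_w_shift assms w_nonneg by (intro sum_le_suminf) auto
    finally show ?thesis .
  qed (use summable_w_shift assms w_nonneg in \<open>simp add: suminf_nonneg\<close>)
  then have "r i * (\<Sum>n\<in>{Suc i..<N}. w n) \<le> r i * (\<Sum>j. w (j + Suc i))"
    using r_nonneg assms by (intro mult_left_mono)
  also have "\<dots> = q i * (b (Suc i) powr (\<nu> * \<theta>) / real (Suc i) powr (\<theta> - 1) * (\<Sum>j. w (j + Suc i)))"
    unfolding r_def by simp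
  also have "\<dots> \<le> q i * (C * T i)"
    using tail_condition[of "Suc i"] q_nonneg assms unfolding w_def T_def by (intro mult_left_mono) auto
  finally show ?thesis
    by (simp add: mult_ac)
qed

lemma summable_scaled_s: "summable (\<lambda>n. \<tau> n * (real n * s n / b n powr \<nu>) powr \<theta>)"
proof (rule summableI_nonneg_bounded)
  define K where "K = \<theta> * (C * moment) powr (\<theta> - 1)"
  have K_nonneg: "0 \<le> K"
    unfolding K_def using theta_ge_1 by simp
  have term_le: "\<tau> n * (real n * s n / b n powr \<nu>) powr \<theta> \<le> K * (w n * (\<Sum>i\<in>{1..<n}. r i))" for n
  proof (cases "n = 0")
    case False
    then have "(real n * s n / b n powr \<nu>) powr \<theta> = real n powr \<theta> / b n powr (\<nu> * \<theta>) * s n powr \<theta>"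
      using b_pos s_nonneg by (simp add: powr_mult powr_divide powr_powr)
    also have "\<dots> \<le> real n powr \<theta> / b n powr (\<nu> * \<theta>) * (K * (\<Sum>i\<in>{1..<n}. r i))"
      unfolding K_def using s_powr_le by (intro mult_left_mono) (auto simp: mult.assoc)
    finally show ?thesis
      using False tau_nonneg[of n] unfolding w_def by (auto dest: mult_left_mono[where c = "\<tau> n"] simp: mult_ac)
  qed (simp add: w_def)
  show "(\<Sum>n<N. \<tau> n * (real n * s n / b n powr \<nu>) powr \<theta>) \<le> K * (C * moment)" for N
  proof -
    have "(\<Sum>n<N. \<tau> n * (real n * s n / b n powr \<nu>) powr \<theta>) \<le> K * (\<Sum>n<N. w n * (\<Sum>i\<in>{1..<n}. r i))"
      using term_le by (simp add: sum_distrib_left sum_mono)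
    also have "(\<Sum>n<N. w n * (\<Sum>i\<in>{1..<n}. r i)) = (\<Sum>i\<in>{1..<N}. r i * (\<Sum>n\<in>{Suc i..<N}. w n))"
      by (rule sum_mult_partial_sums_swap)
    also have "\<dots> \<le> (\<Sum>i\<in>{1..<N}. C * (T i * q i))"
      using r_mult_sum_w_le by (intro sum_mono) simp
    also have "\<dots> \<le> C * moment"
      using C_nonneg sum_T_q_le by (simp add: mult_left_mono flip: sum_distrib_left)
    finally show ?thesis
      using K_nonneg by (simp add: mult_left_mono)
  qed
  show "0 \<le> \<tau> n * (real n * s n / b n powr \<nu>) powr \<theta>" for n
    using tau_nonneg[of n] by (cases "n = 0") simp_all
qed

theorem summable_scaled_if_le_s:
  assumes e_nonneg: "\<And>n. 1 \<le> n \<Longrightarrow> 0 \<le> e n"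
    and e_le: "\<And>n. 1 \<le> n \<Longrightarrow> e n \<le> b 1 powr \<nu> + s n"
  shows "summable (\<lambda>n. \<tau> n * (real n * e n / b n powr \<nu>) powr \<theta>)"
proof (rule summable_comparison_test')
  show "summable (\<lambda>n. 2 powr \<theta> * (b 1 powr (\<nu> * \<theta>) * w n + \<tau> n * (real n * s n / b n powr \<nu>) powr \<theta>))"
    using summable_w summable_scaled_s by (intro summable_mult summable_add)
  fix n :: nat
  assume n: "1 \<le> n"
  define u where "u = real n * b 1 powr \<nu> / b n powr \<nu>"
  define v where "v = real n * s n / b n powr \<nu>"
  have uv_nonneg: "0 \<le> u" "0 \<le> v"
    unfolding u_def v_def using s_nonneg by simp_all
  have "real n * e n / b n powr \<nu> \<le> real n * (b 1 powr \<nu> + s n) / b n powr \<nu>"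
    using e_le[OF n] by (intro divide_right_mono mult_left_mono) simp_all
  also have "\<dots> = u + v"
    unfolding u_def v_def by (simp add: add_divide_distrib distrib_left)
  finally have "(real n * e n / b n powr \<nu>) powr \<theta> \<le> (u + v) powr \<theta>"
    using e_nonneg[OF n] theta_ge_1 by (intro powr_mono2) simp_all
  also have "\<dots> \<le> 2 powr \<theta> * (u powr \<theta> + v powr \<theta>)"
    using uv_nonneg theta_ge_1 by (intro powr_add_le_two_powr) simp_all
  finally have "\<tau> n * (real n * e n / b n powr \<nu>) powr \<theta> \<le> 2 powr \<theta> * (\<tau> n * u powr \<theta> + \<tau> n * v powr \<theta>)"
    using tau_nonneg[OF n] by (auto dest: mult_left_mono[where c = "\<tau> n"] simp: algebra_simps)
  also have "\<tau> n * u powr \<theta> = b 1 powr (\<nu> * \<theta>) * w n"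
    unfolding u_def w_def using b_pos[OF n] b_pos[of 1] by (simp add: powr_mult powr_divide powr_powr)
  finally show "norm (\<tau> n * (real n * e n / b n powr \<nu>) powr \<theta>)
      \<le> 2 powr \<theta> * (b 1 powr (\<nu> * \<theta>) * w n + \<tau> n * (real n * s n / b n powr \<nu>) powr \<theta>)"
    using tau_nonneg[OF n] unfolding v_def by simp
qed

end

definition truncated_power :: "real \<Rightarrow> real \<Rightarrow> real \<Rightarrow> real" where
  "truncated_power \<nu> c y = rpow0 \<bar>y\<bar> \<nu> * indicator {y. \<bar>y\<bar> < c} y"

lemma borel_measurable_truncated_power[measurable]: "truncated_power \<nu> c \<in> borel_measurable borel"
  unfolding truncated_power_def rpow0_def by measurable

lemma truncated_power_nonneg: "0 \<le> truncated_power \<nu> c y"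
  unfolding truncated_power_def rpow0_def by simp

lemma truncated_power_le: "0 \<le> \<nu> \<Longrightarrow> truncated_power \<nu> c y \<le> c powr \<nu>"
  unfolding truncated_power_def rpow0_def by (auto simp: indicator_def intro!: powr_mono2)

lemma truncated_power_le_step:
  assumes "0 \<le> \<nu>" "a \<le> c"
  shows "truncated_power \<nu> c y
    \<le> truncated_power \<nu> a y + c powr \<nu> * (indicator {y. a \<le> \<bar>y\<bar>} y - indicator {y. c \<le> \<bar>y\<bar>} y)"
  using assms truncated_power_le[of \<nu> c y] unfolding truncated_power_def
  by (auto simp: indicator_def)

context prob_space
begin

lemma integrable_truncated_power:
  assumes [measurable]: "random_variable borel X" and "0 \<le> \<nu>"
  shows "integrable M (\<lambda>x. truncated_power \<nu> c (X x))"
  using assms truncated_power_nonneg truncated_power_le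
  by (intro integrable_const_bound[where B = "c powr \<nu>"]) auto

lemma expectation_truncated_power_le:
  assumes [measurable]: "random_variable borel X" and "0 \<le> \<nu>"
  shows "expectation (\<lambda>x. truncated_power \<nu> c (X x)) \<le> c powr \<nu>"
proof -
  have "expectation (\<lambda>x. truncated_power \<nu> c (X x)) \<le> expectation (\<lambda>x. c powr \<nu>)"
    using assms truncated_power_le by (intro integral_mono integrable_truncated_power) auto
  then show ?thesis
    by (simp add: prob_space)
qed

lemma expectation_truncated_power_le_step:
  assumes [measurable]: "random_variable borel X" and "0 \<le> \<nu>" "a \<le> c"
  shows "expectation (\<lambda>x. truncated_power \<nu> c (X x))
    \<le> expectation (\<lambda>x. truncated_power \<nu> a (X x))
      + c powr \<nu> * (prob {x \<in> space M. a \<le> \<bar>X x\<bar>} - prob {x \<in> space M. c \<le> \<bar>X x\<bar>})"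
proof -
  let ?A = "{x \<in> space M. a \<le> \<bar>X x\<bar>}" and ?B = "{x \<in> space M. c \<le> \<bar>X x\<bar>}"
  have indicator_integrable: "integrable M (indicator S :: 'a \<Rightarrow> real)" if "S \<in> sets M" for S
    using that by (simp add: less_top[symmetric])
  have "truncated_power \<nu> c (X x) \<le> truncated_power \<nu> a (X x) + c powr \<nu> * (indicator ?A x - indicator ?B x)"
    if "x \<in> space M" for x
    using truncated_power_le_step[OF assms(2,3), of "X x"] that by (simp add: indicator_def)
  then have "expectation (\<lambda>x. truncated_power \<nu> c (X x))
      \<le> expectation (\<lambda>x. truncated_power \<nu> a (X x) + c powr \<nu> * (indicator ?A x - indicator ?B x))"
    using assms(2)
    by (intro integral_mono Bochner_Integration.integrable_add integrable_mult_right
        Bochner_Integration.integrable_diff indicator_integrable integrable_truncated_power) auto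
  also have "\<dots> = expectation (\<lambda>x. truncated_power \<nu> a (X x)) + c powr \<nu> * (prob ?A - prob ?B)"
    using integrable_truncated_power[OF assms(1,2)] by (simp add: indicator_integrable Int_absorb2)
  finally show ?thesis .
qed


lemma expectation_truncated_power_le_sum:
  assumes [measurable]: "random_variable borel X" and "0 \<le> \<nu>"
    and b_mono: "\<And>n. 1 \<le> n \<Longrightarrow> b n \<le> b (Suc n)" and "1 \<le> n"
  shows "expectation (\<lambda>x. truncated_power \<nu> (b n) (X x)) \<le> b 1 powr \<nu>
    + (\<Sum>i\<in>{1..<n}. b (Suc i) powr \<nu> *
        (prob {x \<in> space M. b i \<le> \<bar>X x\<bar>} - prob {x \<in> space M. b (Suc i) \<le> \<bar>X x\<bar>}))"
  using \<open>1 \<le> n\<close>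
proof (induction n rule: nat_induct_at_least)
  case base
  then show ?case
    using expectation_truncated_power_le[OF assms(1,2)] by simp
next
  case (Suc n)
  then show ?case
    using expectation_truncated_power_le_step[OF assms(1,2) b_mono[OF Suc(1)]] by simp
qed

end

theorem lemma5:
  fixes M :: "'a measure" and X :: "'a \<Rightarrow> real"
    and \<tau> b :: "nat \<Rightarrow> real" and \<nu> C \<theta> :: real
  assumes "prob_space M"
    and "X \<in> borel_measurable M"
    and tau_nonneg: "\<And>n. 1 \<le> n \<Longrightarrow> 0 \<le> \<tau> n"
    and b_pos: "\<And>n. 1 \<le> n \<Longrightarrow> 0 < b n"
    and b_mono: "\<And>n. 1 \<le> n \<Longrightarrow> b n \<le> b (Suc n)"
    and moment: "summable (\<lambda>n. \<tau> (Suc n) * real (Suc n) *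
                    measure M {x \<in> space M. \<bar>X x\<bar> \<ge> b (Suc n)})"
    and "0 \<le> \<nu>"
    and "0 < C"
    and "1 \<le> \<theta>"
    and cond1: "\<And>n. 2 \<le> n \<Longrightarrow>
        summable (\<lambda>j. real (j + n) powr \<theta> * \<tau> (j + n) / b (j + n) powr (\<nu> * \<theta>)) \<and>
        b n powr (\<nu> * \<theta>) / real n powr (\<theta> - 1) *
          (\<Sum>j. real (j + n) powr \<theta> * \<tau> (j + n) / b (j + n) powr (\<nu> * \<theta>))
        \<le> C * (\<Sum>i=1..n-1. real i * \<tau> i)"
    and cond2: "\<And>k n. 2 \<le> n \<Longrightarrow> n \<le> k \<Longrightarrow>
        real k * b n powr \<nu> / b k powr \<nu> \<le> C * (\<Sum>i=1..n-1. real i * \<tau> i)"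
  shows "summable (\<lambda>n. \<tau> (Suc n) *
           (real (Suc n) *
              integral\<^sup>L M (\<lambda>x. rpow0 \<bar>X x\<bar> \<nu> * indicator {y. \<bar>y\<bar> < b (Suc n)} (X x))
            / b (Suc n) powr \<nu>) powr \<theta>)"
proof -
  interpret prob_space M by fact
  define p where "p n = prob {x \<in> space M. b n \<le> \<bar>X x\<bar>}" for n
  interpret tail_sequences \<tau> b p \<nu> C \<theta>
  proof
    show "0 \<le> p n" for n
      by (simp add: p_def)
    show "p (Suc n) \<le> p n" if "1 \<le> n" for n
      unfolding p_def using b_mono[OF that] \<open>X \<in> borel_measurable M\<close>
      by (intro finite_measure_mono) auto
    have "summable (\<lambda>n. real (Suc n) * \<tau> (Suc n) * p (Suc n))"
      using moment by (simp add: p_def mult_ac)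
    then show "summable (\<lambda>n. real n * \<tau> n * p n)"
      using summable_Suc_iff[of "\<lambda>n. real n * \<tau> n * p n"] by simp
    show "0 \<le> C"
      using \<open>0 < C\<close> by simp
  qed (fact assms)+
  have "summable (\<lambda>n. \<tau> n *
      (real n * expectation (\<lambda>x. truncated_power \<nu> (b n) (X x)) / b n powr \<nu>) powr \<theta>)"
    using expectation_truncated_power_le_sum[where b = b, OF assms(2,7) b_mono]
    by (intro summable_scaled_if_le_s) (simp_all add: truncated_power_nonneg s_def q_def p_def)
  from summable_ignore_initial_segment[OF this, of 1] show ?thesis
    unfolding truncated_power_def by simp
qed

end
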